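(* Let $0<a<1$ and $r>0$. For $0\leq t\leq 1$ set $\Delta_t=\{(z,w)\in\mathbb{C}^2:|z|<(1+t)r,\ |w|<(1+2t)r\}$ and \[ F_t(z,w)=\big((1-t)z^2+(a+rt)w,\ az\big),\qquad \Omega_t=F_t(\Delta_t). \] Then: (i) $\Omega_t\subset\subset\Omega_s$ whenever $0\leq t<s\leq1$; (ii) $\Omega_t=\bigcup_{0\leq t'<t}\Omega_{t'}$ for every $0<t\leq 1$; (iii) $\overline{\Omega_t}=\bigcap_{t<s\leq1}\Omega_s$ for every $0\leq t<1$. *)

theory Defs
  imports "HOL-Analysis.Analysis"
begin

definition Delta :: "real \<Rightarrow> real \<Rightarrow> (complex \<times> complex) set" where
  "Delta r t = {(z, w). norm z < (1 + t) * r \<and> norm w < (1 + 2 * t) * r}"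

definition Fmap :: "real \<Rightarrow> real \<Rightarrow> real \<Rightarrow> complex \<times> complex \<Rightarrow> complex \<times> complex" where
  "Fmap a r t = (\<lambda>(z, w). ((1 - of_real t) * z ^ 2 + (of_real a + of_real r * of_real t) * w,
                           of_real a * z))"

definition Omega :: "real \<Rightarrow> real \<Rightarrow> real \<Rightarrow> (complex \<times> complex) set" where
  "Omega a r t = Fmap a r t ` Delta r t"

definition compactly_contained :: "'a::topological_space set \<Rightarrow> 'a set \<Rightarrow> bool" where
  "compactly_contained A B \<longleftrightarrow> compact (closure A) \<and> closure A \<subseteq> B"

end

theory Submission
  imports Defs
begin

text \<open>
  F_t is injective, with inverse G_t(p, q) = (q/a, (p - (1-t)(q/a)^2)/(a+rt)) depending
  continuously on t. So p \<in> \<Omega>_t iff the defect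
  max(|G_t(p)_1| - (1+t)r, |G_t(p)_2| - (1+2t)r) is negative, and p lies in the closure of
  \<Omega>_t iff it is \<le> 0; parts (ii) and (iii) follow by continuity of the defect in t.
  For (i), G_s maps F_t(z,w) to (z, ((a+rt)w + (s-t)z^2)/(a+rs)), whose second coordinate
  stays below (1+2s)r on the closed bidisc of parameter t because the gap is
  r(s-t)(2a+2rs-rt^2) > 0.
\<close>

lemma Fmap_apply [simp]:
  "Fmap a r t (z, w) = ((1 - of_real t) * z^2 + of_real (a + r * t) * w, of_real a * z)"
  by (simp add: Fmap_def)

lemma continuous_on_Fmap: "continuous_on S (Fmap a r t)"
proof -
  have "Fmap a r t = (\<lambda>p. ((1 - of_real t) * fst p ^ 2 + of_real (a + r * t) * snd p, of_real a * fst p))"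
    by (auto simp: fun_eq_iff)
  moreover have "continuous_on S \<dots>"
    by (intro continuous_intros)
  ultimately show ?thesis by simp
qed

lemma closure_Delta:
  assumes "0 \<le> t" "0 < r"
  shows "closure (Delta r t) = cball 0 ((1 + t) * r) \<times> cball 0 ((1 + 2 * t) * r)"
proof -
  have "Delta r t = ball 0 ((1 + t) * r) \<times> ball 0 ((1 + 2 * t) * r)"
    by (auto simp: Delta_def)
  then show ?thesis
    using assms by (simp add: closure_Times)
qed

lemma closure_Omega:
  assumes "0 \<le> t" "0 < r"
  shows "closure (Omega a r t) = Fmap a r t ` (cball 0 ((1 + t) * r) \<times> cball 0 ((1 + 2 * t) * r))"
    (is "_ = Fmap a r t ` ?D")
proof
  have "compact (Fmap a r t ` ?D)"
    by (intro compact_continuous_image continuous_on_Fmap compact_Times compact_cball)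
  moreover have "Omega a r t \<subseteq> Fmap a r t ` ?D"
    unfolding Omega_def using closure_subset[of "Delta r t"] closure_Delta[OF assms] by blast
  ultimately show "closure (Omega a r t) \<subseteq> Fmap a r t ` ?D"
    by (simp add: closure_minimal compact_imp_closed)
  show "Fmap a r t ` ?D \<subseteq> closure (Omega a r t)"
    unfolding Omega_def closure_Delta[OF assms, symmetric]
    by (rule image_closure_subset) (simp_all add: continuous_on_Fmap closure_subset)
qed

lemma compact_closure_Omega:
  assumes "0 \<le> t" "0 < r"
  shows "compact (closure (Omega a r t))"
  unfolding closure_Omega[OF assms]
  by (intro compact_continuous_image continuous_on_Fmap compact_Times compact_cball)

lemma of_real_add_mult_eq_0_iff [simp]:
  "(of_real a + of_real r * of_real t :: 'a::real_algebra_1) = 0 \<longleftrightarrow> a + r * t = 0"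
  by (metis of_real_add of_real_mult of_real_eq_0_iff)

definition Fmap_inv :: "real \<Rightarrow> real \<Rightarrow> real \<Rightarrow> complex \<times> complex \<Rightarrow> complex \<times> complex" where
  "Fmap_inv a r t = (\<lambda>(p, q). (q / of_real a, (p - (1 - of_real t) * (q / of_real a)^2) / of_real (a + r * t)))"

lemma Fmap_inv_Fmap:
  assumes "a \<noteq> 0" "a + r * s \<noteq> 0"
  shows "Fmap_inv a r s (Fmap a r t (z, w))
           = (z, (of_real (a + r * t) * w + of_real (s - t) * z^2) / of_real (a + r * s))"
  using assms by (simp add: Fmap_inv_def field_simps del: of_real_add of_real_mult)

lemma Fmap_Fmap_inv:
  assumes "a \<noteq> 0" "a + r * t \<noteq> 0"
  shows "Fmap a r t (Fmap_inv a r t p) = p"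
  using assms by (cases p) (simp add: Fmap_inv_def field_simps del: of_real_add of_real_mult)

lemma mem_image_Fmap_iff:
  assumes "a \<noteq> 0" "a + r * t \<noteq> 0"
  shows "p \<in> Fmap a r t ` A \<longleftrightarrow> Fmap_inv a r t p \<in> A"
proof -
  have "Fmap_inv a r t (Fmap a r t x) = x" for x
    using Fmap_inv_Fmap[OF assms, of t] assms by (cases x) simp
  then show ?thesis
    using Fmap_Fmap_inv[OF assms] by (metis image_iff)
qed

lemma tendsto_Fmap_inv:
  assumes "a + r * t \<noteq> 0"
  shows "((\<lambda>s. Fmap_inv a r s p) \<longlongrightarrow> Fmap_inv a r t p) (at t within S)"
  using assms unfolding Fmap_inv_def by (cases p) (auto intro!: tendsto_intros)

lemma norm_reparametrised_less:
  fixes z w :: complex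
  assumes "0 < a" "0 < r" "0 \<le> u" "u < v" "u \<le> 1"
    and "norm z \<le> (1 + u) * r" "norm w \<le> (1 + 2 * u) * r"
  shows "norm ((of_real (a + r * u) * w + of_real (v - u) * z^2) / of_real (a + r * v)) < (1 + 2 * v) * r"
proof -
  have au: "0 < a + r * u" and av: "0 < a + r * v"
    using assms by (simp_all add: add_pos_nonneg)
  have "norm (of_real (a + r * u) * w + of_real (v - u) * z^2) \<le> (a + r * u) * norm w + (v - u) * norm z ^ 2"
    using norm_triangle_ineq[of "of_real (a + r * u) * w" "of_real (v - u) * z^2"] au assms(4)
    by (simp add: norm_mult norm_power del: of_real_add of_real_mult of_real_diff)
  also have "\<dots> \<le> (a + r * u) * ((1 + 2 * u) * r) + (v - u) * ((1 + u) * r)^2"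
    using au assms by (intro add_mono mult_left_mono power_mono) auto
  also have "\<dots> < (1 + 2 * v) * r * (a + r * v)"
  proof -
    have "r * u^2 \<le> r * u"
      using assms by (simp add: power2_eq_square mult_left_le_one_le)
    moreover have "r * u < r * v" "0 < r * v"
      using assms by simp_all
    ultimately have "0 < 2 * a + 2 * r * v - r * u^2"
      using assms(1) by linarith
    then have "0 < r * (v - u) * (2 * a + 2 * r * v - r * u^2)"
      using assms by simp
    moreover have "(1 + 2 * v) * r * (a + r * v) - ((a + r * u) * ((1 + 2 * u) * r) + (v - u) * ((1 + u) * r)^2)
        = r * (v - u) * (2 * a + 2 * r * v - r * u^2)"
      by (simp add: algebra_simps power2_eq_square)
    ultimately show ?thesis by linarith
  qed
  finally show ?thesis
    using av by (simp add: norm_divide pos_divide_less_eq del: of_real_add of_real_mult of_real_diff)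
qed

lemma Fmap_coeff_nonzero:
  fixes a r t :: real
  assumes "0 < a" "0 \<le> r" "0 \<le> t"
  shows "a + r * t \<noteq> 0"
  using assms mult_nonneg_nonneg[of r t] by linarith

definition Omega_defect :: "real \<Rightarrow> real \<Rightarrow> complex \<times> complex \<Rightarrow> real \<Rightarrow> real" where
  "Omega_defect a r p s = max (norm (fst (Fmap_inv a r s p)) - (1 + s) * r)
                              (norm (snd (Fmap_inv a r s p)) - (1 + 2 * s) * r)"

lemma mem_Omega_iff_defect:
  assumes "0 < a" "0 < r" "0 \<le> t"
  shows "p \<in> Omega a r t \<longleftrightarrow> Omega_defect a r p t < 0"
  using mem_image_Fmap_iff[of a r t p "Delta r t"] Fmap_coeff_nonzero[of a r t] assms
  by (simp add: Omega_def Delta_def Omega_defect_def case_prod_beta mem_Times_iff)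

lemma mem_closure_Omega_iff_defect:
  assumes "0 < a" "0 < r" "0 \<le> t"
  shows "p \<in> closure (Omega a r t) \<longleftrightarrow> Omega_defect a r p t \<le> 0"
  using mem_image_Fmap_iff[of a r t p] Fmap_coeff_nonzero[of a r t] assms
  by (simp add: closure_Omega Omega_defect_def mem_Times_iff)

lemma tendsto_Omega_defect:
  assumes "0 < a" "0 \<le> r" "0 \<le> t"
  shows "(Omega_defect a r p \<longlongrightarrow> Omega_defect a r p t) (at t within S)"
  unfolding Omega_defect_def
  using Fmap_coeff_nonzero[OF assms] by (intro tendsto_intros tendsto_Fmap_inv)

lemma closure_Omega_subset_Omega:
  assumes "0 < a" "0 < r" "0 \<le> t" "t < s" "t \<le> 1"
  shows "closure (Omega a r t) \<subseteq> Omega a r s"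
proof
  fix p assume "p \<in> closure (Omega a r t)"
  then obtain z w where zw: "norm z \<le> (1 + t) * r" "norm w \<le> (1 + 2 * t) * r"
    and p: "p = Fmap a r t (z, w)"
    using closure_Omega assms by auto
  have "(1 + t) * r < (1 + s) * r"
    using assms by simp
  then have "norm z < (1 + s) * r"
    using zw(1) by linarith
  moreover have "Fmap_inv a r s p
      = (z, (of_real (a + r * t) * w + of_real (s - t) * z^2) / of_real (a + r * s))"
    unfolding p using assms by (intro Fmap_inv_Fmap Fmap_coeff_nonzero) auto
  ultimately show "p \<in> Omega a r s"
    using assms zw norm_reparametrised_less[OF assms(1,2,3,4,5) zw(1,2)]
    by (simp add: mem_Omega_iff_defect Omega_defect_def del: of_real_add of_real_mult of_real_diff)
qed

lemma Omega_eq_Union_Omega_before: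
  assumes "0 < a" "0 < r" "0 < t" "t \<le> 1"
  shows "Omega a r t = (\<Union>t'\<in>{0..<t}. Omega a r t')"
proof (intro equalityI subsetI)
  fix p assume "p \<in> Omega a r t"
  then have "Omega_defect a r p t < 0"
    using assms mem_Omega_iff_defect[of a r t p] by simp
  then have "\<forall>\<^sub>F s in at_left t. Omega_defect a r p s < 0"
    using assms by (intro order_tendstoD(2)[OF tendsto_Omega_defect]) auto
  moreover have "\<forall>\<^sub>F s in at_left t. s \<in> {0<..<t}"
    using assms by (intro eventually_at_left_real)
  ultimately have "\<forall>\<^sub>F s in at_left t. s \<in> {0<..<t} \<and> Omega_defect a r p s < 0"
    by eventually_elim auto
  then obtain s where "s \<in> {0<..<t}" "Omega_defect a r p s < 0"
    using eventually_happens'[OF trivial_limit_at_left_real] by blast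
  then show "p \<in> (\<Union>t'\<in>{0..<t}. Omega a r t')"
    using assms mem_Omega_iff_defect[of a r s p] by auto
next
  fix p assume "p \<in> (\<Union>t'\<in>{0..<t}. Omega a r t')"
  then obtain t' where t': "t' \<in> {0..<t}" "p \<in> Omega a r t'"
    by blast
  have "Omega a r t' \<subseteq> Omega a r t"
    using assms t' by (intro order_trans[OF closure_subset closure_Omega_subset_Omega]) auto
  then show "p \<in> Omega a r t"
    using t' by blast
qed

lemma closure_Omega_eq_Inter_Omega_after:
  assumes "0 < a" "0 < r" "0 \<le> t" "t < 1"
  shows "closure (Omega a r t) = (\<Inter>s\<in>{t<..1}. Omega a r s)"
proof (intro equalityI subsetI INT_I)
  fix p s assume "p \<in> closure (Omega a r t)" "s \<in> {t<..1}"
  then show "p \<in> Omega a r s"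
    using assms closure_Omega_subset_Omega[of a r t s] by auto
next
  fix p assume p: "p \<in> (\<Inter>s\<in>{t<..1}. Omega a r s)"
  have "Omega_defect a r p s \<le> 0" if "s \<in> {t<..<1}" for s
    using p that assms mem_Omega_iff_defect[of a r s p] by auto
  then have "\<forall>\<^sub>F s in at_right t. Omega_defect a r p s \<le> 0"
    using eventually_at_right_real[OF assms(4)] by (rule eventually_mono[rotated])
  then have "Omega_defect a r p t \<le> 0"
    using assms by (intro tendsto_upperbound[OF tendsto_Omega_defect]) auto
  then show "p \<in> closure (Omega a r t)"
    using assms mem_closure_Omega_iff_defect by blast
qed

theorem mainTheorem7:
  fixes a r :: real
  assumes "0 < a" and "a < 1" and "0 < r"
  shows "(\<forall>t s. 0 \<le> t \<and> t < s \<and> s \<le> 1 \<longrightarrow> compactly_contained (Omega a r t) (Omega a r s))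
       \<and> (\<forall>t. 0 < t \<and> t \<le> 1 \<longrightarrow> Omega a r t = (\<Union>t'\<in>{0..<t}. Omega a r t'))
       \<and> (\<forall>t. 0 \<le> t \<and> t < 1 \<longrightarrow> closure (Omega a r t) = (\<Inter>s\<in>{t<..1}. Omega a r s))"
proof (intro conjI allI impI)
  fix t s :: real assume "0 \<le> t \<and> t < s \<and> s \<le> 1"
  then show "compactly_contained (Omega a r t) (Omega a r s)"
    unfolding compactly_contained_def
    using assms compact_closure_Omega closure_Omega_subset_Omega by simp
next
  fix t :: real assume "0 < t \<and> t \<le> 1"
  then show "Omega a r t = (\<Union>t'\<in>{0..<t}. Omega a r t')"
    using assms Omega_eq_Union_Omega_before by simp
next
  fix t :: real assume "0 \<le> t \<and> t < 1"
  then show "closure (Omega a r t) = (\<Inter>s\<in>{t<..1}. Omega a r s)"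
    using assms closure_Omega_eq_Inter_Omega_after by simp
qed

end
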